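(* Let $\|\cdot\|$ be a norm on $\mathbb{R}^{m\times d}$, $C$, $L_X(D)$, $C_X(D)$ as below, $X\in\mathbb{R}^{m\times n}$, and $\mathfrak{D}\subset\mathbb{R}^{m\times d}$. Suppose there are finite constants $L_X(\mathfrak{D})>0$ and $C_X(\mathfrak{D})\ge0$ with $\sup_{D\in\mathfrak{D}}L_X(D)\le L_X(\mathfrak{D})$ and $\sup_{D\in\mathfrak{D}}C_X(D)\le C_X(\mathfrak{D})$. Then for all $D\neq D'\in\mathfrak{D}$, $$\frac{|F_X(D')-F_X(D)|}{\|D'-D\|}\le L_X(\mathfrak{D})\Big(1+\frac{C_X(\mathfrak{D})}{L_X(\mathfrak{D})}\|D'-D\|\Big).$$
   Context: A penalty is a function $g:\mathbb{R}^d\to\mathbb{R}\cup\{+\infty\}$ with $g\ge0$, not identically $+\infty$. $\mathcal{L}_x(D,\alpha)=\tfrac12\|x-D\alpha\|_2^2+g(\alpha)$, $f_x(D)=\inf_\alpha\mathcal{L}_x(D,\alpha)$, $F_X(D)=\frac1n\sum_i f_{x_i}(D)$ for $X=[x_1,\dots,x_n]$. $\|\Delta\|_{1\to2}=\max_j\|\delta_j\|_2$. $\|\cdot\|_\star$ is the dual norm of $\|\cdot\|$ w.r.t. the Frobenius inner product, and $C>0$ is a constant with $\|\Delta\|_{1\to2}^2\le C\|\Delta\|^2$ for all $\Delta$. For $\epsilon>0$, $\mathfrak{A}_\epsilon(X,D)=\{A=[\alpha_1,\dots,\alpha_n]:\ \mathcal{L}_{x_i}(D,\alpha_i)\le f_{x_i}(D)+\epsilon\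 \forall i\}$; $L_X(D)=\inf_{\epsilon>0}\sup_{A\in\mathfrak{A}_\epsilon(X,D)}\frac1n\|(X-DA)A^\top\|_\star$ and $C_X(D)=\inf_{\epsilon>0}\sup_{A\in\mathfrak{A}_\epsilon(X,D)}\frac{C}{2n}\sum_i\|\alpha_i\|_1^2$. *)

theory Defs
  imports "HOL-Analysis.Analysis" "HOL-Library.Extended_Real"
begin

text \<open>Matrices are rendered with type-indexed dimensions:
  D :: real^'d^'m (m x d), X :: real^'n^'m (m x n), codes A :: real^'n^'d (d x n).
  Columns are 'column i M'.\<close>

definition is_penalty :: "(real^'d \<Rightarrow> ereal) \<Rightarrow> bool" where
  "is_penalty g \<longleftrightarrow> (\<forall>a. 0 \<le> g a) \<and> (\<exists>a. g a \<noteq> \<infinity>)"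

definition is_norm_on :: "('a::real_vector \<Rightarrow> real) \<Rightarrow> bool" where
  "is_norm_on N \<longleftrightarrow> (\<forall>x. N x = 0 \<longleftrightarrow> x = 0) \<and> (\<forall>c x. N (c *\<^sub>R x) = \<bar>c\<bar> * N x)
     \<and> (\<forall>x y. N (x + y) \<le> N x + N y)"

definition frob_inner :: "real^'d^'m \<Rightarrow> real^'d^'m \<Rightarrow> real" where
  "frob_inner M P = (\<Sum>i\<in>UNIV. \<Sum>j\<in>UNIV. M $ i $ j * P $ i $ j)"

definition dual_norm :: "(real^'d^'m \<Rightarrow> real) \<Rightarrow> real^'d^'m \<Rightarrow> real" where
  "dual_norm N M = Sup {frob_inner M P | P. N P \<le> 1}"

definition norm_1to2 :: "real^'d^'m \<Rightarrow> real" where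
  "norm_1to2 P = Max {norm (column j P) | j. True}"

definition norm_l1 :: "real^'d \<Rightarrow> real" where
  "norm_l1 a = (\<Sum>j\<in>UNIV. \<bar>a $ j\<bar>)"

definition lossL :: "(real^'d \<Rightarrow> ereal) \<Rightarrow> real^'m \<Rightarrow> real^'d^'m \<Rightarrow> real^'d \<Rightarrow> ereal" where
  "lossL g x D a = ereal (1/2 * (norm (x - D *v a))\<^sup>2) + g a"

definition fx :: "(real^'d \<Rightarrow> ereal) \<Rightarrow> real^'m \<Rightarrow> real^'d^'m \<Rightarrow> ereal" where
  "fx g x D = (INF a. lossL g x D a)"

text \<open>F_X(D); each f_x(D) is finite for a penalty g, so we average the real values.\<close>
definition FX :: "(real^'d \<Rightarrow> ereal) \<Rightarrow> real^'n^'m \<Rightarrow> real^'d^'m \<Rightarrow> real" where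
  "FX g X D = (1 / real CARD('n)) * (\<Sum>i\<in>UNIV. real_of_ereal (fx g (column i X) D))"

definition approx_codes :: "(real^'d \<Rightarrow> ereal) \<Rightarrow> real \<Rightarrow> real^'n^'m \<Rightarrow> real^'d^'m \<Rightarrow> (real^'n^'d) set" where
  "approx_codes g \<epsilon> X D = {A. \<forall>i. lossL g (column i X) D (column i A) \<le> fx g (column i X) D + ereal \<epsilon>}"

definition LX :: "(real^'d \<Rightarrow> ereal) \<Rightarrow> (real^'d^'m \<Rightarrow> real) \<Rightarrow> real^'n^'m \<Rightarrow> real^'d^'m \<Rightarrow> ereal" where
  "LX g N X D = (INF \<epsilon>\<in>{0<..}. SUP A\<in>approx_codes g \<epsilon> X D.
      ereal (1 / real CARD('n) * dual_norm N ((X - D ** A) ** transpose A)))"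

definition CX :: "(real^'d \<Rightarrow> ereal) \<Rightarrow> real \<Rightarrow> real^'n^'m \<Rightarrow> real^'d^'m \<Rightarrow> ereal" where
  "CX g C X D = (INF \<epsilon>\<in>{0<..}. SUP A\<in>approx_codes g \<epsilon> X D.
      ereal (C / (2 * real CARD('n)) * (\<Sum>i\<in>UNIV. (norm_l1 (column i A))\<^sup>2)))"

end

theory Submission
  imports Defs
begin

text \<open>Codes that are \<open>\<epsilon>\<close>-optimal for \<open>D\<close> remain admissible for \<open>D'\<close>, and expanding
  \<open>\<frac>1\<frac>2 \<parallel>x - D'\<alpha>\<parallel>\<^sup>2\<close> around \<open>D\<close> with \<open>\<Delta> = D' - D\<close> gives
  \<open>f\<^sub>x(D') - f\<^sub>x(D) \<le> \<epsilon> - \<langle>x - D\<alpha>, \<Delta>\<alpha>\<rangle> + \<frac>1\<frac>2 \<parallel>\<Delta>\<alpha>\<parallel>\<^sup>2\<close>.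
  Averaged over the columns, the linear terms add up to \<open>-\<langle>(X - DA)A\<^sup>T, \<Delta>\<rangle>\<close>, which the dual
  norm bounds by \<open>\<parallel>(X - DA)A\<^sup>T\<parallel>\<^sub>\<star> \<parallel>\<Delta>\<parallel>\<close>, while \<open>\<parallel>\<Delta>\<alpha>\<parallel>\<^sub>2 \<le> \<parallel>\<Delta>\<parallel>\<^sub>1\<^sub>\<rightarrow>\<^sub>2 \<parallel>\<alpha>\<parallel>\<^sub>1 \<le> \<surd>C \<parallel>\<Delta>\<parallel> \<parallel>\<alpha>\<parallel>\<^sub>1\<close>
  controls the quadratic terms. Letting \<open>\<epsilon> \<rightarrow> 0\<close> yields
  \<open>F\<^sub>X(D') - F\<^sub>X(D) \<le> L \<parallel>\<Delta>\<parallel> + C\<^sub>X \<parallel>\<Delta>\<parallel>\<^sup>2\<close>, and exchanging \<open>D\<close> and \<open>D'\<close> gives the absolute value.\<close>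

lemma is_norm_on_zero: "is_norm_on N \<Longrightarrow> N 0 = 0"
  unfolding is_norm_on_def by blast

lemma is_norm_on_uminus:
  assumes "is_norm_on N"
  shows "N (- x) = N x"
proof -
  have "N ((-1) *\<^sub>R x) = \<bar>-1\<bar> * N x"
    using assms unfolding is_norm_on_def by blast
  then show ?thesis by simp
qed

lemma is_norm_on_nonneg:
  assumes "is_norm_on N"
  shows "0 \<le> N x"
proof -
  have "N (x + - x) \<le> N x + N (- x)"
    using assms unfolding is_norm_on_def by blast
  then show ?thesis using is_norm_on_zero[OF assms] is_norm_on_uminus[OF assms, of x] by simp
qed

lemma is_norm_on_pos:
  assumes "is_norm_on N" and "x \<noteq> 0"
  shows "0 < N x"
  using assms is_norm_on_nonneg[OF assms(1), of x] unfolding is_norm_on_def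
  by (metis order_le_less)

lemma norm_column_le_norm_1to2: "norm (column j P) \<le> norm_1to2 P"
  unfolding norm_1to2_def by (rule Max_ge) (auto simp: full_SetCompr_eq)

lemma abs_entry_le_norm_1to2: "\<bar>P $ i $ j\<bar> \<le> norm_1to2 P"
proof -
  have "\<bar>P $ i $ j\<bar> = \<bar>column j P $ i\<bar>" by (simp add: column_def)
  also have "\<dots> \<le> norm (column j P)" by (rule component_le_norm_cart)
  finally show ?thesis using norm_column_le_norm_1to2 by (rule order_trans)
qed

lemma norm_matrix_vector_mult_le_norm_1to2:
  fixes P :: "real^'d^'m" and a :: "real^'d"
  shows "norm (P *v a) \<le> norm_1to2 P * norm_l1 a"
proof -
  have "norm (P *v a) = norm (\<Sum>j\<in>UNIV. a $ j *\<^sub>R column j P)"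
    by (simp add: matrix_mult_sum scalar_mult_eq_scaleR)
  also have "\<dots> \<le> (\<Sum>j\<in>UNIV. \<bar>a $ j\<bar> * norm (column j P))"
    by (rule order_trans[OF norm_sum]) simp
  also have "\<dots> \<le> (\<Sum>j\<in>UNIV. \<bar>a $ j\<bar> * norm_1to2 P)"
    by (intro sum_mono mult_left_mono norm_column_le_norm_1to2) simp
  also have "\<dots> = norm_1to2 P * norm_l1 a"
    by (simp add: norm_l1_def sum_distrib_left mult.commute)
  finally show ?thesis .
qed

lemma sq_norm_matrix_vector_mult_le:
  assumes "\<forall>P. (norm_1to2 P)\<^sup>2 \<le> C * (N P)\<^sup>2"
  shows "(norm (P *v a))\<^sup>2 \<le> C * (N P)\<^sup>2 * (norm_l1 a)\<^sup>2"
proof -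
  have "(norm (P *v a))\<^sup>2 \<le> (norm_1to2 P * norm_l1 a)\<^sup>2"
    by (rule power_mono[OF norm_matrix_vector_mult_le_norm_1to2 norm_ge_zero])
  also have "\<dots> \<le> C * (N P)\<^sup>2 * (norm_l1 a)\<^sup>2"
    using assms by (simp add: power_mult_distrib mult_right_mono)
  finally show ?thesis .
qed

lemma frob_inner_le_norm_1to2:
  "frob_inner M P \<le> (\<Sum>i\<in>UNIV. \<Sum>j\<in>UNIV. \<bar>M $ i $ j\<bar>) * norm_1to2 P"
proof -
  have "frob_inner M P \<le> (\<Sum>i\<in>UNIV. \<Sum>j\<in>UNIV. \<bar>M $ i $ j\<bar> * norm_1to2 P)"
    unfolding frob_inner_def
    by (intro sum_mono, rule order_trans[OF abs_ge_self])
      (simp add: abs_mult mult_left_mono abs_entry_le_norm_1to2)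
  then show ?thesis by (simp add: sum_distrib_right)
qed

lemma frob_inner_uminus_right: "frob_inner M (- P) = - frob_inner M P"
  by (simp add: frob_inner_def sum_negf)

text \<open>The comparison with \<open>\<parallel>\<cdot>\<parallel>\<^sub>1\<^sub>\<rightarrow>\<^sub>2\<close> keeps the set whose \<open>Sup\<close> defines \<open>dual_norm\<close> bounded;
  otherwise \<open>Sup\<close> would return an unspecified value.\<close>

lemma frob_inner_le_dual_norm:
  fixes N :: "real^'d^'m \<Rightarrow> real"
  assumes N: "is_norm_on N" and comparable: "\<And>Q. norm_1to2 Q \<le> K * N Q"
  shows "frob_inner M P \<le> dual_norm N M * N P"
proof -
  let ?S = "\<Sum>i\<in>UNIV. \<Sum>j\<in>UNIV. \<bar>M $ i $ j\<bar>"
  have "bdd_above {frob_inner M Q | Q. N Q \<le> 1}"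
  proof (rule bdd_aboveI)
    fix y assume "y \<in> {frob_inner M Q | Q. N Q \<le> 1}"
    then obtain Q where y: "y = frob_inner M Q" and Q: "N Q \<le> 1" by blast
    have "K * N Q \<le> \<bar>K\<bar> * 1"
      using Q is_norm_on_nonneg[OF N, of Q] by (intro mult_mono) auto
    then have "norm_1to2 Q \<le> \<bar>K\<bar>"
      using comparable[of Q] by linarith
    then have "?S * norm_1to2 Q \<le> ?S * \<bar>K\<bar>"
      by (rule mult_left_mono) (auto intro: sum_nonneg)
    then show "y \<le> ?S * \<bar>K\<bar>"
      using y frob_inner_le_norm_1to2[of M Q] by simp
  qed
  show ?thesis
  proof (cases "P = 0")
    case True
    then show ?thesis by (simp add: is_norm_on_zero[OF N] frob_inner_def)
  next
    case False
    then have pos: "0 < N P" by (rule is_norm_on_pos[OF N])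
    have "N ((1 / N P) *\<^sub>R P) = \<bar>1 / N P\<bar> * N P"
      using N unfolding is_norm_on_def by blast
    with pos have "N ((1 / N P) *\<^sub>R P) \<le> 1" by simp
    then have "frob_inner M ((1 / N P) *\<^sub>R P) \<le> dual_norm N M"
      unfolding dual_norm_def by (intro cSup_upper \<open>bdd_above _\<close>) blast
    moreover have "frob_inner M ((1 / N P) *\<^sub>R P) = frob_inner M P / N P"
      by (simp add: frob_inner_def sum_divide_distrib)
    ultimately show ?thesis using pos by (simp add: pos_divide_le_eq)
  qed
qed

lemma norm_1to2_le_sqrt_mult:
  assumes N: "is_norm_on N" and "0 \<le> C" and "\<forall>P. (norm_1to2 P)\<^sup>2 \<le> C * (N P)\<^sup>2"
  shows "norm_1to2 P \<le> sqrt C * N P"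
proof (rule power2_le_imp_le)
  show "(norm_1to2 P)\<^sup>2 \<le> (sqrt C * N P)\<^sup>2"
    using assms(3) \<open>0 \<le> C\<close> by (simp add: power_mult_distrib)
  show "0 \<le> sqrt C * N P"
    using \<open>0 \<le> C\<close> is_norm_on_nonneg[OF N] by simp
qed

lemma INF_SUP_le_ereal_obtain:
  fixes f :: "'a \<Rightarrow> real"
  assumes "(INF e\<in>{0<..}. SUP A\<in>S e. ereal (f A)) \<le> ereal L" and "0 < \<eta>"
  obtains e :: real where "0 < e" and "\<And>A. A \<in> S e \<Longrightarrow> f A \<le> L + \<eta>"
proof -
  have "(INF e\<in>{0<..}. SUP A\<in>S e. ereal (f A)) < ereal (L + \<eta>)"
    using assms by (simp add: le_less_trans)
  then obtain e :: real where "0 < e" and "(SUP A\<in>S e. ereal (f A)) < ereal (L + \<eta>)"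
    by (auto simp: INF_less_iff)
  then show ?thesis
    using that by (metis SUP_upper ereal_less_eq(3) less_imp_le order_trans)
qed

lemma fx_finite:
  assumes "is_penalty g"
  shows "\<bar>fx g x D\<bar> \<noteq> \<infinity>"
proof -
  have "0 \<le> fx g x D"
    using assms unfolding fx_def lossL_def is_penalty_def by (intro INF_greatest) simp
  obtain a where "g a \<noteq> \<infinity>"
    using assms unfolding is_penalty_def by blast
  have "fx g x D \<le> lossL g x D a"
    unfolding fx_def by (rule INF_lower) simp
  also have "\<dots> < \<infinity>"
    using \<open>g a \<noteq> \<infinity>\<close> unfolding lossL_def by simp
  finally show ?thesis using \<open>0 \<le> fx g x D\<close> by auto
qed

lemma approx_codes_mono: "e \<le> e' \<Longrightarrow> approx_codes g e X D \<subseteq> approx_codes g e' X D"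
  unfolding approx_codes_def by (fastforce intro: order_trans add_left_mono)

lemma approx_codes_nonempty:
  assumes g: "is_penalty g" and "0 < e"
  shows "approx_codes g e X D \<noteq> {}"
proof -
  have "\<exists>a. lossL g (column i X) D a \<le> fx g (column i X) D + ereal e" for i
  proof -
    have "fx g (column i X) D < fx g (column i X) D + ereal e"
      using fx_finite[OF g, of "column i X" D] \<open>0 < e\<close> by (cases "fx g (column i X) D") auto
    then show ?thesis unfolding fx_def by (auto simp: INF_less_iff intro: less_imp_le)
  qed
  then obtain \<alpha> where \<alpha>: "\<And>i. lossL g (column i X) D (\<alpha> i) \<le> fx g (column i X) D + ereal e"
    by metis
  have "column i (\<chi> j i. \<alpha> i $ j) = \<alpha> i" for i
    by (simp add: column_def vec_eq_iff)
  with \<alpha> have "(\<chi> j i. \<alpha> i $ j) \<in> approx_codes g e X D"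
    by (simp add: approx_codes_def)
  then show ?thesis by blast
qed

lemma half_sq_norm_residual_expand:
  fixes x :: "real^'m" and D D' :: "real^'d^'m" and a :: "real^'d"
  shows "1/2 * (norm (x - D' *v a))\<^sup>2 = 1/2 * (norm (x - D *v a))\<^sup>2
     - inner (x - D *v a) ((D' - D) *v a) + 1/2 * (norm ((D' - D) *v a))\<^sup>2"
proof -
  have "x - D' *v a = (x - D *v a) - (D' - D) *v a"
    by (simp add: matrix_vector_mult_diff_rdistrib)
  then show ?thesis
    unfolding power2_norm_eq_inner
    by (simp add: inner_diff_left inner_diff_right inner_commute algebra_simps)
qed

lemma fx_diff_le:
  assumes g: "is_penalty g" and a: "lossL g x D a \<le> fx g x D + ereal e"
  shows "real_of_ereal (fx g x D') - real_of_ereal (fx g x D)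
     \<le> e - inner (x - D *v a) ((D' - D) *v a) + 1/2 * (norm ((D' - D) *v a))\<^sup>2"
proof -
  obtain r where r: "fx g x D = ereal r"
    using fx_finite[OF g, of x D] by (cases "fx g x D") auto
  obtain r' where r': "fx g x D' = ereal r'"
    using fx_finite[OF g, of x D'] by (cases "fx g x D'") auto
  have "g a \<noteq> \<infinity>" "0 \<le> g a"
    using a r g unfolding lossL_def is_penalty_def by auto
  then obtain \<gamma> where \<gamma>: "g a = ereal \<gamma>" by (cases "g a") auto
  have "1/2 * (norm (x - D *v a))\<^sup>2 + \<gamma> \<le> r + e"
    using a r \<gamma> unfolding lossL_def by simp
  moreover have "fx g x D' \<le> lossL g x D' a"
    unfolding fx_def by (rule INF_lower) simp
  then have "r' \<le> 1/2 * (norm (x - D' *v a))\<^sup>2 + \<gamma>"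
    using r' \<gamma> unfolding lossL_def by simp
  ultimately have "r' - r \<le> e - inner (x - D *v a) ((D' - D) *v a) + 1/2 * (norm ((D' - D) *v a))\<^sup>2"
    using half_sq_norm_residual_expand[of x D' a D] by linarith
  then show ?thesis using r r' by simp
qed

lemma column_matrix_mult_diff:
  fixes X :: "real^'n^'m" and D :: "real^'d^'m" and A :: "real^'n^'d"
  shows "column i (X - D ** A) = column i X - D *v column i A"
  by (simp add: column_def matrix_vector_mult_def matrix_matrix_mult_def vec_eq_iff)

lemma sum_inner_column_eq_frob_inner:
  fixes R :: "real^'n^'m" and \<Delta> :: "real^'d^'m" and A :: "real^'n^'d"
  shows "(\<Sum>i\<in>UNIV. inner (column i R) (\<Delta> *v column i A)) = frob_inner (R ** transpose A) \<Delta>"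
proof -
  have "(\<Sum>i\<in>UNIV. inner (column i R) (\<Delta> *v column i A))
      = (\<Sum>i\<in>UNIV. \<Sum>k\<in>UNIV. \<Sum>j\<in>UNIV. R $ k $ i * A $ j $ i * \<Delta> $ k $ j)"
    by (simp add: inner_vec_def matrix_vector_mult_def column_def sum_distrib_left mult_ac)
  also have "\<dots> = (\<Sum>k\<in>UNIV. \<Sum>j\<in>UNIV. \<Sum>i\<in>UNIV. R $ k $ i * A $ j $ i * \<Delta> $ k $ j)"
    by (subst sum.swap) (rule sum.cong[OF refl], rule sum.swap)
  also have "\<dots> = frob_inner (R ** transpose A) \<Delta>"
    by (simp add: frob_inner_def matrix_matrix_mult_def transpose_def sum_distrib_right)
  finally show ?thesis .
qed

lemma FX_diff_le_approx_code:
  fixes g :: "real^'d \<Rightarrow> ereal" and N :: "real^'d^'m \<Rightarrow> real" and X :: "real^'n^'m"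
  assumes g: "is_penalty g" and N: "is_norm_on N" and "0 \<le> C"
    and comparable: "\<forall>P. (norm_1to2 P)\<^sup>2 \<le> C * (N P)\<^sup>2"
    and A: "A \<in> approx_codes g e X D"
  shows "FX g X D' - FX g X D \<le> e
     + N (D' - D) * (1 / real CARD('n) * dual_norm N ((X - D ** A) ** transpose A))
     + (N (D' - D))\<^sup>2 * (C / (2 * real CARD('n)) * (\<Sum>i\<in>UNIV. (norm_l1 (column i A))\<^sup>2))"
proof -
  define \<Delta> where "\<Delta> = D' - D"
  define M where "M = (X - D ** A) ** transpose A"
  define n where "n = real CARD('n)"
  define Q where "Q = C * (N \<Delta>)\<^sup>2 * (\<Sum>i\<in>UNIV. (norm_l1 (column i A))\<^sup>2) / 2"
  have column_bound: "real_of_ereal (fx g (column i X) D') - real_of_ereal (fx g (column i X) D)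
     \<le> e - inner (column i (X - D ** A)) (\<Delta> *v column i A)
       + C * (N \<Delta>)\<^sup>2 * (norm_l1 (column i A))\<^sup>2 / 2" for i
  proof -
    have "lossL g (column i X) D (column i A) \<le> fx g (column i X) D + ereal e"
      using A unfolding approx_codes_def by blast
    then show ?thesis
      using fx_diff_le[OF g, of "column i X" D "column i A" e D']
        sq_norm_matrix_vector_mult_le[OF comparable, of \<Delta> "column i A"]
      unfolding column_matrix_mult_diff \<Delta>_def by linarith
  qed
  have "(\<Sum>i\<in>UNIV. real_of_ereal (fx g (column i X) D') - real_of_ereal (fx g (column i X) D))
      \<le> (\<Sum>i\<in>UNIV. e - inner (column i (X - D ** A)) (\<Delta> *v column i A)
        + C * (N \<Delta>)\<^sup>2 * (norm_l1 (column i A))\<^sup>2 / 2)"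
    by (rule sum_mono) (rule column_bound)
  also have "\<dots> = n * e - frob_inner M \<Delta> + Q"
    unfolding M_def Q_def n_def sum_inner_column_eq_frob_inner[symmetric]
    by (simp add: sum.distrib sum_subtractf sum_distrib_left sum_divide_distrib)
  also have "\<dots> \<le> n * e + dual_norm N M * N \<Delta> + Q"
    using frob_inner_le_dual_norm[OF N norm_1to2_le_sqrt_mult[OF N \<open>0 \<le> C\<close> comparable],
        of M "- \<Delta>"]
    by (simp add: frob_inner_uminus_right is_norm_on_uminus[OF N])
  finally have sum_bound: "(\<Sum>i\<in>UNIV. real_of_ereal (fx g (column i X) D')
      - real_of_ereal (fx g (column i X) D)) \<le> \<dots>" .
  have "FX g X D' - FX g X D
      = (\<Sum>i\<in>UNIV. real_of_ereal (fx g (column i X) D') - real_of_ereal (fx g (column i X) D)) / n"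
    unfolding FX_def n_def by (simp add: sum_subtractf diff_divide_distrib)
  also have "\<dots> \<le> (n * e + dual_norm N M * N \<Delta> + Q) / n"
    using sum_bound by (simp add: n_def divide_right_mono)
  also have "\<dots> = e + N \<Delta> * (1 / n * dual_norm N M)
      + (N \<Delta>)\<^sup>2 * (C / (2 * n) * (\<Sum>i\<in>UNIV. (norm_l1 (column i A))\<^sup>2))"
    by (simp add: n_def Q_def field_simps)
  finally show ?thesis unfolding \<Delta>_def M_def n_def .
qed

lemma FX_diff_le_LX_CX_plus:
  fixes g :: "real^'d \<Rightarrow> ereal" and N :: "real^'d^'m \<Rightarrow> real" and X :: "real^'n^'m"
  assumes g: "is_penalty g" and N: "is_norm_on N" and "0 \<le> C"
    and comparable: "\<forall>P. (norm_1to2 P)\<^sup>2 \<le> C * (N P)\<^sup>2"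
    and L: "LX g N X D \<le> ereal L" and CX: "CX g C X D \<le> ereal K" and "0 < \<eta>"
  shows "FX g X D' - FX g X D
    \<le> N (D' - D) * L + (N (D' - D))\<^sup>2 * K + \<eta> * (1 + N (D' - D) + (N (D' - D))\<^sup>2)"
proof -
  define t where "t = N (D' - D)"
  obtain e\<^sub>L where "0 < e\<^sub>L" and e\<^sub>L: "\<And>A. A \<in> approx_codes g e\<^sub>L X D \<Longrightarrow>
      1 / real CARD('n) * dual_norm N ((X - D ** A) ** transpose A) \<le> L + \<eta>"
    using INF_SUP_le_ereal_obtain[OF L[unfolded LX_def] \<open>0 < \<eta>\<close>] by blast
  obtain e\<^sub>C where "0 < e\<^sub>C" and e\<^sub>C: "\<And>A. A \<in> approx_codes g e\<^sub>C X D \<Longrightarrow>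
      C / (2 * real CARD('n)) * (\<Sum>i\<in>UNIV. (norm_l1 (column i A))\<^sup>2) \<le> K + \<eta>"
    using INF_SUP_le_ereal_obtain[OF CX[unfolded CX_def] \<open>0 < \<eta>\<close>] by blast
  define e where "e = min \<eta> (min e\<^sub>L e\<^sub>C)"
  obtain A where A: "A \<in> approx_codes g e X D"
    using approx_codes_nonempty[OF g, of e] \<open>0 < \<eta>\<close> \<open>0 < e\<^sub>L\<close> \<open>0 < e\<^sub>C\<close>
    unfolding e_def by auto
  have "e \<le> e\<^sub>L" "e \<le> e\<^sub>C"
    unfolding e_def by simp_all
  then have A\<^sub>L: "A \<in> approx_codes g e\<^sub>L X D" and A\<^sub>C: "A \<in> approx_codes g e\<^sub>C X D"
    using approx_codes_mono A by blast+
  have "FX g X D' - FX g X D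
      \<le> e + t * (1 / real CARD('n) * dual_norm N ((X - D ** A) ** transpose A))
        + t\<^sup>2 * (C / (2 * real CARD('n)) * (\<Sum>i\<in>UNIV. (norm_l1 (column i A))\<^sup>2))"
    unfolding t_def by (rule FX_diff_le_approx_code[OF g N \<open>0 \<le> C\<close> comparable A])
  also have "\<dots> \<le> \<eta> + t * (L + \<eta>) + t\<^sup>2 * (K + \<eta>)"
    using e\<^sub>L[OF A\<^sub>L] e\<^sub>C[OF A\<^sub>C] is_norm_on_nonneg[OF N]
    unfolding t_def e_def by (intro add_mono mult_left_mono) auto
  finally show ?thesis unfolding t_def by (simp add: algebra_simps)
qed

lemma FX_diff_le_LX_CX:
  fixes g :: "real^'d \<Rightarrow> ereal" and N :: "real^'d^'m \<Rightarrow> real" and X :: "real^'n^'m"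
  assumes g: "is_penalty g" and N: "is_norm_on N" and "0 \<le> C"
    and comparable: "\<forall>P. (norm_1to2 P)\<^sup>2 \<le> C * (N P)\<^sup>2"
    and L: "LX g N X D \<le> ereal L" and CX: "CX g C X D \<le> ereal K"
  shows "FX g X D' - FX g X D \<le> N (D' - D) * L + (N (D' - D))\<^sup>2 * K"
proof (rule field_le_epsilon)
  fix \<delta> :: real assume "0 < \<delta>"
  define t where "t = N (D' - D)"
  have "0 < 1 + t + t\<^sup>2"
    using is_norm_on_nonneg[OF N] unfolding t_def by (simp add: add_pos_nonneg)
  with \<open>0 < \<delta>\<close> show "FX g X D' - FX g X D \<le> N (D' - D) * L + (N (D' - D))\<^sup>2 * K + \<delta>"
    using FX_diff_le_LX_CX_plus[OF g N \<open>0 \<le> C\<close> comparable L CX, of "\<delta> / (1 + t + t\<^sup>2)" D']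
    unfolding t_def by simp
qed

theorem mainTheorem4:
  fixes g :: "real^'d \<Rightarrow> ereal"
    and N :: "real^'d^'m \<Rightarrow> real"
    and C :: real
    and X :: "real^'n^'m"
    and \<DD> :: "(real^'d^'m) set"
    and LD CD :: real
  assumes "is_penalty g"
    and "is_norm_on N"
    and "C > 0"
    and "\<forall>P. (norm_1to2 P)\<^sup>2 \<le> C * (N P)\<^sup>2"
    and "LD > 0" and "CD \<ge> 0"
    and "\<forall>D\<in>\<DD>. LX g N X D \<le> ereal LD"
    and "\<forall>D\<in>\<DD>. CX g C X D \<le> ereal CD"
    and "D \<in> \<DD>" and "D' \<in> \<DD>" and "D \<noteq> D'"
  shows "\<bar>FX g X D' - FX g X D\<bar> / N (D' - D) \<le> LD * (1 + CD / LD * N (D' - D))"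
proof -
  define t where "t = N (D' - D)"
  have "0 < t"
    unfolding t_def using assms(11) by (intro is_norm_on_pos[OF assms(2)]) simp
  have one_sided: "FX g X E' - FX g X E \<le> N (E' - E) * LD + (N (E' - E))\<^sup>2 * CD"
    if "E \<in> \<DD>" for E E'
    by (rule FX_diff_le_LX_CX[OF assms(1,2) _ assms(4)]) (use assms(3,7,8) that in auto)
  have "N (D - D') = t"
    unfolding t_def using is_norm_on_uminus[OF assms(2), of "D' - D"] by simp
  with one_sided[OF assms(10), of D] have "FX g X D - FX g X D' \<le> t * LD + t\<^sup>2 * CD"
    by simp
  moreover have "FX g X D' - FX g X D \<le> t * LD + t\<^sup>2 * CD"
    using one_sided[OF assms(9), of D'] unfolding t_def .
  ultimately have "\<bar>FX g X D' - FX g X D\<bar> / t \<le> LD + CD * t"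
    using \<open>0 < t\<close> by (simp add: divide_le_eq power2_eq_square algebra_simps)
  also have "\<dots> = LD * (1 + CD / LD * t)"
    using \<open>0 < LD\<close> by (simp add: field_simps)
  finally show ?thesis unfolding t_def .
qed

end
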